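(* Let $P_{\mathrm{T}}>0$ and $\sigma^2>0$. For a beamformer $\mathbf{w}:\mathcal{S}_{\mathrm{T}}\to\mathbb{C}^{1\times N}$ define $\mathbf{e}(\mathbf{r})=\int_{\mathcal{S}_{\mathrm{T}}} h(\mathbf{r},\mathbf{s})\mathbf{w}(\mathbf{s})\,d\mathbf{s}$ and $\mathbf{Q}=\int_{\mathcal{S}_{\mathrm{R}}}\mathbf{e}^H(\mathbf{r})\mathbf{e}(\mathbf{r})\,d\mathbf{r}$. Consider the constrained problem $$\max_{\mathbf{w}(\mathbf{s})}\ \log\det\left(\mathbf{I}_N+\frac{1}{\sigma^2}\mathbf{Q}\right)\quad\text{s.t.}\quad \int_{\mathcal{S}_{\mathrm{T}}}\|\mathbf{w}(\mathbf{s})\|^2d\mathbf{s}\le P_{\mathrm{T}},$$ and the unconstrained problem $$\max_{\mathbf{w}(\mathbf{s})}\ \widetilde{R}=\log\det\left(\mathbf{I}_N+\frac{1}{\widetilde{\sigma}^2}\mathbf{Q}\right),\qquad \widetilde{\sigma}^2=\frac{\sigma^2}{P_{\mathrm{T}}}\int_{\mathcal{S}_{\mathrm{T}}}\|\mathbf{w}(\mathbf{s})\|^2d\mathbf{s}.$$ Let $\mathbf{w}^{\dagger}(\mathbf{s})$ denote an optimal solution of the unconstrained problem. Then an optimal solution of the constrained problem is $$\mathbf{w}^{\star}(\mathbf{s})=\sqrt{\frac{P_{\mathrm{T}}}{\int_{\mathcal{S}_{\mathrm{T}}}\|\mathbf{w}^{\dagger}(\mathbf{s})\|^2d\mathbf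{s}}}\,\mathbf{w}^{\dagger}(\mathbf{s}).$$
   Context: $\mathcal{S}_{\mathrm{T}},\mathcal{S}_{\mathrm{R}}\subset\mathbb{R}^3$ are bounded planar rectangular surfaces with surface (Lebesgue) integration, $h:\mathcal{S}_{\mathrm{R}}\times\mathcal{S}_{\mathrm{T}}\to\mathbb{C}$ is a bounded channel kernel, beamformers $\mathbf{w}(\mathbf{s})=[w_1(\mathbf{s}),\dots,w_N(\mathbf{s})]\in\mathbb{C}^{1\times N}$ are square-integrable on $\mathcal{S}_{\mathrm{T}}$ (nonzero in the unconstrained problem so that $\widetilde{\sigma}^2>0$), and $\|\cdot\|$ is the Euclidean norm. *)

theory Defs
  imports "HOL-Analysis.Analysis"
begin

definition rect_param :: "real^3 \<Rightarrow> real^3 \<Rightarrow> real^3 \<Rightarrow> real \<times> real \<Rightarrow> real^3" where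
  "rect_param c a b = (\<lambda>(u, v). c + u *\<^sub>R a + v *\<^sub>R b)"

definition valid_rect :: "real^3 \<Rightarrow> real^3 \<Rightarrow> real \<Rightarrow> real \<Rightarrow> bool" where
  "valid_rect a b L1 L2 \<longleftrightarrow> norm a = 1 \<and> norm b = 1 \<and> a \<bullet> b = 0 \<and> L1 > 0 \<and> L2 > 0"

definition rect_set :: "real^3 \<Rightarrow> real^3 \<Rightarrow> real^3 \<Rightarrow> real \<Rightarrow> real \<Rightarrow> (real^3) set" where
  "rect_set c a b L1 L2 = rect_param c a b ` cbox (0, 0) (L1, L2)"

text \<open>Surface (area) measure on the rectangle: push-forward of 2D Lebesgue measure on the
  parameter box under the isometric parametrisation (= 2D Hausdorff measure on the surface).\<close>

definition rect_measure :: "real^3 \<Rightarrow> real^3 \<Rightarrow> real^3 \<Rightarrow> real \<Rightarrow> real \<Rightarrow> (real^3) measure" where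
  "rect_measure c a b L1 L2 =
     distr (restrict_space lborel (cbox (0, 0) (L1, L2))) borel (rect_param c a b)"

text \<open>Beamformers w(s) in C^{1 x N}, represented as vectors complex^'n (N = CARD('n)).\<close>

definition admissible :: "(real^3) measure \<Rightarrow> (real^3 \<Rightarrow> complex^'n) \<Rightarrow> bool" where
  "admissible M w \<longleftrightarrow> w \<in> borel_measurable M \<and> integrable M (\<lambda>s. (norm (w s))\<^sup>2)"

definition energy :: "(real^3) measure \<Rightarrow> (real^3 \<Rightarrow> complex^'n) \<Rightarrow> real" where
  "energy M w = (\<integral>s. (norm (w s))\<^sup>2 \<partial>M)"

definition beam_e :: "(real^3) measure \<Rightarrow> (real^3 \<Rightarrow> real^3 \<Rightarrow> complex)
    \<Rightarrow> (real^3 \<Rightarrow> complex^'n) \<Rightarrow> real^3 \<Rightarrow> complex^'n" where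
  "beam_e MT h w r = (\<chi> i. \<integral>s. h r s * w s $ i \<partial>MT)"

definition gram_Q :: "(real^3) measure \<Rightarrow> (real^3) measure \<Rightarrow> (real^3 \<Rightarrow> real^3 \<Rightarrow> complex)
    \<Rightarrow> (real^3 \<Rightarrow> complex^'n) \<Rightarrow> complex^'n^'n" where
  "gram_Q MR MT h w = (\<chi> i j. \<integral>r. cnj (beam_e MT h w r $ i) * beam_e MT h w r $ j \<partial>MR)"

text \<open>log det (I + Q / s2); the determinant is real and positive for Hermitian PSD Q,
  so we take the natural log of its real part.\<close>
definition logdet_rate :: "real \<Rightarrow> complex^'n^'n \<Rightarrow> real" where
  "logdet_rate s2 Q = ln (Re (det (mat 1 + (1 / s2) *\<^sub>R Q)))"

end

theory Submission
  imports Defs "HOL-Computational_Algebra.Fundamental_Theorem_Algebra"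
begin

(* Scaling a beamformer by c scales both Q and its energy by c^2, so the unconstrained objective
   is scale invariant, and at the rescaled beamformer of energy exactly P_T it equals the
   constrained objective.  For feasible w the effective noise (sigma^2/P_T) * energy w is at most
   sigma^2, and s |-> log det (I + Q / s) is antitone for positive semidefinite Q: if
   (I + z Q) x = 0 with x <> 0 then |x|^2 + z x^H Q x = 0, so all roots r_k of the polynomial
   z |-> det (I + z Q) are negative reals and det (I + t Q) = prod (1 - t / r_k) grows with t >= 0.
   Feasible beamformers of zero energy, excluded from the unconstrained problem, give Q = 0. *)

lemma poly_mono_if_neg_real_roots:
  fixes p :: "complex poly"
  assumes p0: "poly p 0 = 1"
    and roots: "\<And>z. poly p z = 0 \<Longrightarrow> Im z = 0 \<and> Re z < 0"
    and t: "0 \<le> t1" "t1 \<le> t2"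
  shows "1 \<le> Re (poly p (of_real t1)) \<and> Re (poly p (of_real t1)) \<le> Re (poly p (of_real t2))"
proof -
  obtain root where decomp: "smult (lead_coeff p) (\<Prod>i<degree p. [:-root i, 1:]) = p"
    by (rule complex_poly_decompose')
  define c where "c = lead_coeff p"
  have poly_p: "poly p z = c * (\<Prod>i<degree p. z - root i)" for z
    by (subst decomp [symmetric]) (simp add: c_def poly_prod)
  have root: "Im (root i) = 0 \<and> Re (root i) < 0" if "i < degree p" for i
    using roots [of "root i"] that by (auto simp: poly_p prod_zero_iff)
  define g where "g t = (\<Prod>i<degree p. t - Re (root i))" for t
  have poly_p_real: "poly p (of_real t) = c * of_real (g t)" for t
    unfolding poly_p g_def of_real_prod
    by (intro arg_cong [where f = "(*) c"] prod.cong) (simp_all add: complex_eq_iff root)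
  have g_pos: "0 < g t" if "0 \<le> t" for t
    unfolding g_def using that by (intro prod_pos) (force dest: root)
  have g_mono: "g s \<le> g t" if "0 \<le> s" "s \<le> t" for s t
    unfolding g_def using that by (intro prod_mono) (force dest: root)
  have "c * of_real (g 0) = 1"
    using p0 poly_p_real [of 0] by simp
  then have "c = of_real (1 / g 0)"
    using g_pos [of 0] by (simp add: eq_divide_eq)
  then have "Re (poly p (of_real t)) = g t / g 0" for t
    by (simp add: poly_p_real)
  then show ?thesis
    using g_pos [of 0] g_mono [of 0 t1] g_mono [of t1 t2] t by (simp add: divide_right_mono)
qed

lemma mat_mult_nth: "(mat z ** Q) $ i $ j = z * Q $ i $ j"
  for Q :: "'a::comm_ring_1^'n::finite^'m::finite"
  unfolding matrix_matrix_mult_def mat_def by (simp add: if_distrib [of "\<lambda>a. a * _"] cong: if_cong)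

definition pos_semidef :: "complex^'n::finite^'n \<Rightarrow> bool" where
  "pos_semidef Q \<longleftrightarrow> (\<forall>x. \<exists>q\<ge>0. (\<Sum>i\<in>UNIV. \<Sum>j\<in>UNIV. cnj (x$i) * Q$i$j * x$j) = of_real q)"

lemma sum_cnj_mult_self: "(\<Sum>i\<in>UNIV. cnj (x$i) * x$i) = of_real ((norm x)\<^sup>2)"
  for x :: "complex^'n::finite"
  unfolding norm_vec_def L2_set_def
  by (simp add: sum_nonneg of_real_sum complex_norm_square mult.commute del: of_real_power)

lemma det_eq_0_imp_kernel:
  fixes A :: "'a::field^'n::finite^'n"
  assumes "det A = 0"
  obtains x where "x \<noteq> 0" "A *v x = 0"
  using assms by (metis invertible_det_nz invertible_left_inverse matrix_left_invertible_ker)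

lemma pos_semidef_det_one_plus_eq_0:
  fixes Q :: "complex^'n::finite^'n"
  assumes psd: "pos_semidef Q" and det0: "det (mat 1 + mat z ** Q) = 0"
  shows "Im z = 0 \<and> Re z < 0"
proof -
  obtain x where "x \<noteq> 0" and ker: "(mat 1 + mat z ** Q) *v x = 0"
    using det0 by (rule det_eq_0_imp_kernel)
  obtain q where "q \<ge> 0" and q: "(\<Sum>i\<in>UNIV. \<Sum>j\<in>UNIV. cnj (x$i) * Q$i$j * x$j) = of_real q"
    using psd unfolding pos_semidef_def by blast
  have "0 = (\<Sum>i\<in>UNIV. cnj (x$i) * (x + (mat z ** Q) *v x)$i)"
    using ker by (simp add: matrix_vector_mult_add_rdistrib)
  also have "\<dots> = (\<Sum>i\<in>UNIV. cnj (x$i) * x$i) + z * (\<Sum>i\<in>UNIV. \<Sum>j\<in>UNIV. cnj (x$i) * Q$i$j * x$j)"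
    by (simp add: matrix_vector_mult_def mat_mult_nth algebra_simps sum.distrib sum_distrib_left)
  finally have "z * of_real q = - of_real ((norm x)\<^sup>2)"
    by (simp add: q sum_cnj_mult_self add_eq_0_iff)
  then have re: "Re z * q = - (norm x)\<^sup>2" and im: "Im z * q = 0"
    by (simp_all add: complex_eq_iff)
  from re \<open>x \<noteq> 0\<close> have "Re z * q < 0"
    by simp
  with \<open>q \<ge> 0\<close> have "Re z < 0" "q > 0"
    by (auto simp: mult_less_0_iff)
  with im show ?thesis
    by simp
qed

definition det_one_plus_poly :: "complex^'n::finite^'n \<Rightarrow> complex poly" where
  "det_one_plus_poly Q = (\<Sum>p | p permutes (UNIV :: 'n set). of_int (sign p) *
      (\<Prod>i\<in>UNIV. [:mat 1 $ i $ p i, Q $ i $ p i:]))"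

lemma poly_det_one_plus_poly: "poly (det_one_plus_poly Q) z = det (mat 1 + mat z ** Q)"
  unfolding det_one_plus_poly_def det_def by (simp add: poly_sum poly_prod mat_mult_nth)

lemma pos_semidef_det_one_plus_mono:
  fixes Q :: "complex^'n::finite^'n"
  assumes "pos_semidef Q" "0 \<le> t1" "t1 \<le> t2"
  shows "1 \<le> Re (det (mat 1 + t1 *\<^sub>R Q)) \<and> Re (det (mat 1 + t1 *\<^sub>R Q)) \<le> Re (det (mat 1 + t2 *\<^sub>R Q))"
proof -
  have scaleR_eq: "t *\<^sub>R Q = mat (complex_of_real t) ** Q" for t
    by (simp add: vec_eq_iff mat_mult_nth scaleR_conv_of_real [where 'a = complex])
  have "poly (det_one_plus_poly Q) 0 = 1"
    by (simp add: poly_det_one_plus_poly)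
  moreover have "Im z = 0 \<and> Re z < 0" if "poly (det_one_plus_poly Q) z = 0" for z
    using pos_semidef_det_one_plus_eq_0 [OF \<open>pos_semidef Q\<close>] that by (simp add: poly_det_one_plus_poly)
  ultimately show ?thesis
    using poly_mono_if_neg_real_roots [of "det_one_plus_poly Q" t1 t2] assms(2,3)
    by (simp add: scaleR_eq poly_det_one_plus_poly)
qed

lemma logdet_rate_antimono:
  assumes "pos_semidef Q" "0 < s'" "s' \<le> s"
  shows "logdet_rate s Q \<le> logdet_rate s' Q"
proof -
  have "0 \<le> 1 / s" "1 / s \<le> 1 / s'"
    using assms by (auto simp: frac_le)
  from pos_semidef_det_one_plus_mono [OF \<open>pos_semidef Q\<close> this]
  show ?thesis
    unfolding logdet_rate_def by simp
qed

lemma logdet_rate_nonneg: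
  assumes "pos_semidef Q" "0 \<le> s"
  shows "0 \<le> logdet_rate s Q"
  using pos_semidef_det_one_plus_mono [OF \<open>pos_semidef Q\<close>, of "1 / s" "1 / s"] assms
  unfolding logdet_rate_def by simp

lemma logdet_rate_scaleR: "logdet_rate s (c *\<^sub>R Q) = logdet_rate (s / c) Q"
  by (simp add: logdet_rate_def)

lemma pos_semidef_gram:
  fixes e :: "'a \<Rightarrow> complex^'n::finite"
  assumes int: "\<And>i j. integrable M (\<lambda>r. cnj (e r $ i) * e r $ j)"
  shows "pos_semidef (\<chi> i j. \<integral>r. cnj (e r $ i) * e r $ j \<partial>M)"
  unfolding pos_semidef_def
proof
  fix x :: "complex^'n"
  define f where "f r = (\<Sum>j\<in>UNIV. e r $ j * x$j)" for r
  have "(\<Sum>i\<in>UNIV. \<Sum>j\<in>UNIV. cnj (x$i) * (\<chi> i j. \<integral>r. cnj (e r $ i) * e r $ j \<partial>M)$i$j * x$j)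
      = (\<integral>r. (\<Sum>i\<in>UNIV. \<Sum>j\<in>UNIV. cnj (x$i) * (cnj (e r $ i) * e r $ j) * x$j) \<partial>M)"
    (is "?form = _")
    using int by (simp add: integrable_mult_left integrable_mult_right)
  also have "\<dots> = (\<integral>r. cnj (f r) * f r \<partial>M)"
    unfolding f_def cnj_sum sum_product by (simp add: mult_ac)
  also have "\<dots> = (\<integral>r. of_real ((cmod (f r))\<^sup>2) \<partial>M)"
    by (simp add: complex_norm_square mult.commute del: of_real_power)
  also have "\<dots> = of_real (\<integral>r. (cmod (f r))\<^sup>2 \<partial>M)"
    by (rule integral_complex_of_real)
  finally show "\<exists>q\<ge>0. ?form = of_real q"
    by (intro exI [of _ "\<integral>r. (cmod (f r))\<^sup>2 \<partial>M"]) (simp add: integral_nonneg)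
qed

lemma measurable_beam_e_nth:
  assumes "sigma_finite_measure MT"
    and h: "(\<lambda>(r, s). h r s) \<in> borel_measurable (MR \<Otimes>\<^sub>M MT)"
    and w: "w \<in> borel_measurable MT"
  shows "(\<lambda>r. beam_e MT h w r $ i) \<in> borel_measurable MR"
proof -
  have "(\<lambda>p. w (snd p) $ i) \<in> borel_measurable (MR \<Otimes>\<^sub>M MT)"
    by (rule borel_measurable_continuous_on [OF _ measurable_compose [OF measurable_snd w]])
      (intro continuous_intros)
  with h have "(\<lambda>(r, s). h r s * w s $ i) \<in> borel_measurable (MR \<Otimes>\<^sub>M MT)"
    by (simp add: split_beta')
  then show ?thesis
    unfolding beam_e_def vec_lambda_beta
    by (rule sigma_finite_measure.borel_measurable_lebesgue_integral [OF assms(1)])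
qed

lemma norm_beam_e_nth_le:
  assumes "finite_measure MT" "admissible MT w"
    and h: "\<And>s. s \<in> ST \<Longrightarrow> norm (h r s) \<le> B" and ST: "AE s in MT. s \<in> ST"
  shows "norm (beam_e MT h w r $ i) \<le> (\<integral>s. B * (1 + (norm (w s))\<^sup>2) \<partial>MT)"
proof -
  have "integrable MT (\<lambda>s. B * (1 + (norm (w s))\<^sup>2))"
    using assms(1,2) by (simp add: admissible_def finite_measure.integrable_const)
  moreover have "norm (h r s * w s $ i) \<le> B * (1 + (norm (w s))\<^sup>2)" if "s \<in> ST" for s
  proof -
    have "norm (w s $ i) \<le> 1 + (norm (w s))\<^sup>2"
      using Finite_Cartesian_Product.norm_nth_le [of "w s" i] zero_le_power2 [of "norm (w s) - 1/2"]
      by (simp add: power2_eq_square algebra_simps)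
    then show ?thesis
      using h [OF that] unfolding norm_mult
      by (intro mult_mono) (auto intro: order_trans [OF norm_ge_zero])
  qed
  moreover have "0 \<le> B" if "s \<in> ST" for s
    using h [OF that] norm_ge_zero order_trans by blast
  ultimately have "(\<integral>s. norm (h r s * w s $ i) \<partial>MT) \<le> (\<integral>s. B * (1 + (norm (w s))\<^sup>2) \<partial>MT)"
    using ST by (intro integral_mono_AE') (auto elim: AE_mp)
  then show ?thesis
    unfolding beam_e_def vec_lambda_beta by (rule order_trans [OF integral_norm_bound])
qed

lemma pos_semidef_gram_Q:
  assumes MT: "finite_measure MT" and MR: "finite_measure MR"
    and h_meas: "(\<lambda>(r, s). h r s) \<in> borel_measurable (MR \<Otimes>\<^sub>M MT)"
    and h_bdd: "\<And>r s. r \<in> SR \<Longrightarrow> s \<in> ST \<Longrightarrow> norm (h r s) \<le> B"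
    and ST: "AE s in MT. s \<in> ST" and SR: "AE r in MR. r \<in> SR"
    and w: "admissible MT w"
  shows "pos_semidef (gram_Q MR MT h w)"
  unfolding gram_Q_def
proof (rule pos_semidef_gram)
  fix i j
  define K where "K = (\<integral>s. B * (1 + (norm (w s))\<^sup>2) \<partial>MT)"
  have e_meas: "(\<lambda>r. beam_e MT h w r $ k) \<in> borel_measurable MR" for k
    using MT h_meas w by (intro measurable_beam_e_nth) (auto simp: admissible_def finite_measure_def)
  have e_bdd: "norm (beam_e MT h w r $ k) \<le> K" if "r \<in> SR" for r k
    unfolding K_def using MT w h_bdd [OF that] ST by (rule norm_beam_e_nth_le)
  show "integrable MR (\<lambda>r. cnj (beam_e MT h w r $ i) * beam_e MT h w r $ j)"
  proof (rule finite_measure.integrable_const_bound [OF MR])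
    show "AE r in MR. norm (cnj (beam_e MT h w r $ i) * beam_e MT h w r $ j) \<le> K * K"
      using SR by eventually_elim
        (auto simp: norm_mult intro!: mult_mono e_bdd intro: order_trans [OF norm_ge_zero e_bdd])
    show "(\<lambda>r. cnj (beam_e MT h w r $ i) * beam_e MT h w r $ j) \<in> borel_measurable MR"
      using e_meas by (intro borel_measurable_times borel_measurable_continuous_on [of cnj])
        (auto intro: continuous_intros)
  qed
qed

lemma continuous_on_rect_param: "continuous_on UNIV (rect_param c a b)"
  unfolding rect_param_def split_beta' by (intro continuous_intros)

lemma measurable_rect_param: "rect_param c a b \<in> restrict_space lborel B \<rightarrow>\<^sub>M borel"
  by (intro measurable_restrict_space1)
    (simp add: measurable_lborel2 borel_measurable_continuous_onI [OF continuous_on_rect_param])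

lemma finite_measure_rect_measure: "finite_measure (rect_measure c a b L1 L2)"
proof (rule finite_measureI)
  let ?B = "cbox (0::real, 0::real) (L1, L2)"
  have "emeasure (rect_measure c a b L1 L2) (space (rect_measure c a b L1 L2)) = emeasure lborel ?B"
    unfolding rect_measure_def
    by (simp add: emeasure_distr [OF measurable_rect_param] emeasure_restrict_space space_restrict_space)
  also have "\<dots> < \<infinity>"
    by (rule emeasure_bounded_finite) simp
  finally show "emeasure (rect_measure c a b L1 L2) (space (rect_measure c a b L1 L2)) \<noteq> \<infinity>"
    by simp
qed

lemma AE_rect_measure_rect_set: "AE s in rect_measure c a b L1 L2. s \<in> rect_set c a b L1 L2"
proof -
  have "compact (rect_set c a b L1 L2)"
    unfolding rect_set_def
    by (rule compact_continuous_image [OF continuous_on_subset [OF continuous_on_rect_param]]) auto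
  then have "rect_set c a b L1 L2 \<in> sets borel"
    by (simp add: compact_imp_closed borel_closed)
  moreover have "AE x in restrict_space lborel (cbox (0, 0) (L1, L2)). rect_param c a b x \<in> rect_set c a b L1 L2"
    by (subst AE_restrict_space_iff) (auto simp: rect_set_def)
  ultimately show ?thesis
    unfolding rect_measure_def by (subst AE_distr_iff [OF measurable_rect_param]) auto
qed

lemma beam_e_scaleR: "beam_e MT h (\<lambda>s. c *\<^sub>R w s) r = c *\<^sub>R beam_e MT h w r"
  by (simp add: beam_e_def vec_eq_iff scaleR_conv_of_real [where 'a = complex] mult.left_commute)

lemma gram_Q_scaleR: "gram_Q MR MT h (\<lambda>s. c *\<^sub>R w s) = c\<^sup>2 *\<^sub>R gram_Q MR MT h w"
  by (simp add: gram_Q_def beam_e_scaleR vec_eq_iff scaleR_conv_of_real [where 'a = complex]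
      power2_eq_square mult_ac)

lemma energy_scaleR: "energy MT (\<lambda>s. c *\<^sub>R w s) = c\<^sup>2 * energy MT w"
  by (simp add: energy_def power_mult_distrib)

lemma admissible_scaleR: "admissible MT w \<Longrightarrow> admissible MT (\<lambda>s. c *\<^sub>R w s)"
  by (simp add: admissible_def power_mult_distrib borel_measurable_scaleR)

lemma gram_Q_eq_0_if_energy_eq_0:
  assumes "admissible MT w" "energy MT w = 0"
  shows "gram_Q MR MT h w = 0"
proof -
  have "AE s in MT. w s = 0"
    using assms integral_nonneg_eq_0_iff_AE [of MT "\<lambda>s. (norm (w s))\<^sup>2"]
    by (simp add: admissible_def energy_def)
  then have "beam_e MT h w r = 0" for r
    unfolding beam_e_def vec_eq_iff by (auto intro: integral_eq_zero_AE elim: AE_mp)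
  then show ?thesis
    by (simp add: gram_Q_def vec_eq_iff)
qed

theorem lemma1:
  fixes cT aT bT cR aR bR :: "real^3"
    and LT1 LT2 LR1 LR2 PT \<sigma>2 :: real
    and h :: "real^3 \<Rightarrow> real^3 \<Rightarrow> complex"
    and wd :: "real^3 \<Rightarrow> complex^'n::finite"
  defines "MT \<equiv> rect_measure cT aT bT LT1 LT2"
    and "MR \<equiv> rect_measure cR aR bR LR1 LR2"
  assumes rectT: "valid_rect aT bT LT1 LT2"
    and rectR: "valid_rect aR bR LR1 LR2"
    and PT: "PT > 0" and sig: "\<sigma>2 > 0"
    and h_meas: "(\<lambda>(r, s). h r s) \<in> borel_measurable (MR \<Otimes>\<^sub>M MT)"
    and h_bdd: "\<exists>B. \<forall>r \<in> rect_set cR aR bR LR1 LR2. \<forall>s \<in> rect_set cT aT bT LT1 LT2.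
                    norm (h r s) \<le> B"
    and wd_adm: "admissible MT wd" and wd_nz: "energy MT wd > 0"
    and wd_opt: "\<forall>w :: real^3 \<Rightarrow> complex^'n. admissible MT w \<and> energy MT w > 0 \<longrightarrow>
        logdet_rate (\<sigma>2 / PT * energy MT w) (gram_Q MR MT h w)
          \<le> logdet_rate (\<sigma>2 / PT * energy MT wd) (gram_Q MR MT h wd)"
  shows "let ws = (\<lambda>s. sqrt (PT / energy MT wd) *\<^sub>R wd s) in
           admissible MT ws \<and> energy MT ws \<le> PT \<and>
           (\<forall>w :: real^3 \<Rightarrow> complex^'n. admissible MT w \<and> energy MT w \<le> PT \<longrightarrow>
              logdet_rate \<sigma>2 (gram_Q MR MT h w) \<le> logdet_rate \<sigma>2 (gram_Q MR MT h ws))"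
proof -
  obtain B where B: "\<forall>r \<in> rect_set cR aR bR LR1 LR2. \<forall>s \<in> rect_set cT aT bT LT1 LT2. norm (h r s) \<le> B"
    using h_bdd by blast
  have psd: "pos_semidef (gram_Q MR MT h w)" if "admissible MT w" for w :: "real^3 \<Rightarrow> complex^'n"
    using h_meas B that unfolding MT_def MR_def
    by (intro pos_semidef_gram_Q [OF finite_measure_rect_measure finite_measure_rect_measure _ _
          AE_rect_measure_rect_set AE_rect_measure_rect_set]) auto
  define E where "E = energy MT wd"
  define ws where "ws = (\<lambda>s. sqrt (PT / E) *\<^sub>R wd s)"
  have ws_energy: "energy MT ws = PT"
    using wd_nz PT by (simp add: ws_def energy_scaleR E_def)
  have ws_rate: "logdet_rate \<sigma>2 (gram_Q MR MT h ws) = logdet_rate (\<sigma>2 / PT * E) (gram_Q MR MT h wd)"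
    using wd_nz PT by (simp add: ws_def gram_Q_scaleR logdet_rate_scaleR E_def)
  have "logdet_rate \<sigma>2 (gram_Q MR MT h w) \<le> logdet_rate \<sigma>2 (gram_Q MR MT h ws)"
    if w: "admissible MT w" "energy MT w \<le> PT" for w :: "real^3 \<Rightarrow> complex^'n"
  proof (cases "energy MT w = 0")
    case True
    then show ?thesis
      using logdet_rate_nonneg [OF psd [OF admissible_scaleR [OF wd_adm]]] sig
      by (simp add: gram_Q_eq_0_if_energy_eq_0 [OF w(1)] logdet_rate_def ws_def)
  next
    case False
    then have pos: "0 < energy MT w"
      using energy_def [of MT w] by (simp add: order_less_le integral_nonneg)
    have "logdet_rate \<sigma>2 (gram_Q MR MT h w) \<le> logdet_rate (\<sigma>2 / PT * energy MT w) (gram_Q MR MT h w)"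
      using pos sig PT w(2) by (intro logdet_rate_antimono [OF psd [OF w(1)]]) (auto simp: field_simps)
    also have "\<dots> \<le> logdet_rate \<sigma>2 (gram_Q MR MT h ws)"
      using wd_opt w(1) pos ws_rate by (simp add: E_def)
    finally show ?thesis .
  qed
  then show ?thesis
    using admissible_scaleR [OF wd_adm] ws_energy unfolding Let_def ws_def E_def by auto
qed

end
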